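(* Let $d,n\ge 1$, let $\eta\in\mathbb{R}$, and let $S=\{(\mathbf{x}^S_i,y^S_i)\}_{i=1}^{|S|}$ and $T=\{(\mathbf{x}^T_j,y^T_j)\}_{j=1}^{|T|}$ be datasets with $\mathbf{x}\in\mathbb{R}^d$, $y\in\mathbb{R}$, where $n=|S|$. For a dataset $D$ and weights $\mathbf{w}\in\mathbb{R}^{|D|}$ define the loss $\mathcal{L}(\boldsymbol{\theta};D,\mathbf{w})=\sum_{i=1}^{|D|}w_i(\langle\mathbf{x}^D_i,\boldsymbol{\theta}\rangle-y^D_i)^2$ for $\boldsymbol{\theta}\in\mathbb{R}^d$. Let $\mathbf{g}_T(\boldsymbol{\theta})=\nabla_{\boldsymbol{\theta}}\mathcal{L}(\boldsymbol{\theta};T,\mathbb{1})$, $\mathbf{H}_T=\nabla^2_{\boldsymbol{\theta}}\mathcal{L}(\boldsymbol{\theta};T,\mathbb{1})$, $\mathbf{g}_{\mathbf{w}}(\boldsymbol{\theta})=\nabla_{\boldsymbol{\theta}}\mathcal{L}(\boldsymbol{\theta};S,\mathbf{w})$ and $\mathbf{H}_{\mathbf{w}}=\nabla^2_{\boldsymbol{\theta}}\mathcal{L}(\boldsymbol{\theta};S,\mathbf{w})$ (the Hessians do not depend on $\boldsymbol{\theta}$). Let $\mathbf{G}_S(\boldsymbol{\theta})\in\mathbb{R}^{n\times d}$ be the matrix whose $i$-th row is $\nabla_{\boldsymbol{\theta}}(\langle\mathbf{x}^S_i,\boldsymbol{\theta}\rangle-y^S_i)^2$, and define $\mathbf{p}(\boldsymbol{\theta})=\mathbf{G}_S(\boldsymbol{\theta})\mathbf{g}_T(\boldsymbol{\theta})$,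 $\mathbf{Q}(\boldsymbol{\theta})=\mathbf{G}_S(\boldsymbol{\theta})\mathbf{H}_T\mathbf{G}_S(\boldsymbol{\theta})^T$ and $f(\mathbf{w};\boldsymbol{\theta})=-\mathbf{p}(\boldsymbol{\theta})^T\mathbf{w}+\frac{\eta}{2}\mathbf{w}^T\mathbf{Q}(\boldsymbol{\theta})\mathbf{w}$. Define $\mathbf{a}_{\mathbf{w}}=-\mathbf{H}_{\mathbf{w}}\mathbf{g}_T(\boldsymbol{\theta})-\mathbf{H}_T\mathbf{g}_{\mathbf{w}}(\boldsymbol{\theta})+\eta\mathbf{H}_{\mathbf{w}}\mathbf{H}_T\mathbf{g}_{\mathbf{w}}(\boldsymbol{\theta})$ and $\mathbf{B}_{\mathbf{w}}=-\mathbf{H}_T\mathbf{H}_{\mathbf{w}}+\frac{\eta}{2}\mathbf{H}_{\mathbf{w}}\mathbf{H}_T\mathbf{H}_{\mathbf{w}}$. Then for all $\boldsymbol{\theta},\boldsymbol{\delta}\in\mathbb{R}^d$ and $\mathbf{w}\in\mathbb{R}^n$, $f(\mathbf{w};\boldsymbol{\theta}+\boldsymbol{\delta})=f(\mathbf{w};\boldsymbol{\theta})+\mathbf{a}_{\mathbf{w}}^T\boldsymbol{\delta}+\boldsymbol{\delta}^T\mathbf{B}_{\mathbf{w}}\boldsymbol{\delta}$.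
   Context: $\mathbb{1}$ denotes the all-ones vector of the appropriate length. The quantities $\mathbf{g}_{\mathbf{w}}$, $\mathbf{a}_{\mathbf{w}}$, $\mathbf{B}_{\mathbf{w}}$ are evaluated at the base point $\boldsymbol{\theta}$. *)

theory Defs
  imports "HOL-Analysis.Analysis"
begin

text \<open>A dataset with index type 'i is given by features x :: 'i => real^'d and labels y :: 'i => real.
  Weights are vectors w :: real^'i.\<close>

definition wloss :: "('i::finite \<Rightarrow> real^'d) \<Rightarrow> ('i \<Rightarrow> real) \<Rightarrow> real^'i \<Rightarrow> real^'d \<Rightarrow> real" where
  "wloss x y w \<theta> = (\<Sum>i\<in>UNIV. w $ i * (x i \<bullet> \<theta> - y i)^2)"

definition grad :: "(real^'d \<Rightarrow> real) \<Rightarrow> real^'d \<Rightarrow> real^'d" where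
  "grad f \<theta> = (\<chi> k. frechet_derivative f (at \<theta>) (axis k 1))"

definition hess :: "(real^'d \<Rightarrow> real) \<Rightarrow> real^'d \<Rightarrow> real^'d^'d" where
  "hess f \<theta> = matrix (frechet_derivative (grad f) (at \<theta>))"

definition GS :: "('n::finite \<Rightarrow> real^'d) \<Rightarrow> ('n \<Rightarrow> real) \<Rightarrow> real^'d \<Rightarrow> real^'d^'n" where
  "GS xS yS \<theta> = (\<chi> i. grad (\<lambda>t. (xS i \<bullet> t - yS i)^2) \<theta>)"

definition gT :: "('m::finite \<Rightarrow> real^'d) \<Rightarrow> ('m \<Rightarrow> real) \<Rightarrow> real^'d \<Rightarrow> real^'d" where
  "gT xT yT \<theta> = grad (wloss xT yT (vec 1)) \<theta>"

definition HT :: "('m::finite \<Rightarrow> real^'d) \<Rightarrow> ('m \<Rightarrow> real) \<Rightarrow> real^'d \<Rightarrow> real^'d^'d" where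
  "HT xT yT \<theta> = hess (wloss xT yT (vec 1)) \<theta>"

definition gw :: "('n::finite \<Rightarrow> real^'d) \<Rightarrow> ('n \<Rightarrow> real) \<Rightarrow> real^'n \<Rightarrow> real^'d \<Rightarrow> real^'d" where
  "gw xS yS w \<theta> = grad (wloss xS yS w) \<theta>"

definition Hw :: "('n::finite \<Rightarrow> real^'d) \<Rightarrow> ('n \<Rightarrow> real) \<Rightarrow> real^'n \<Rightarrow> real^'d \<Rightarrow> real^'d^'d" where
  "Hw xS yS w \<theta> = hess (wloss xS yS w) \<theta>"

definition pvec :: "('n::finite \<Rightarrow> real^'d) \<Rightarrow> ('n \<Rightarrow> real) \<Rightarrow> ('m::finite \<Rightarrow> real^'d) \<Rightarrow> ('m \<Rightarrow> real) \<Rightarrow> real^'d \<Rightarrow> real^'n" where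
  "pvec xS yS xT yT \<theta> = GS xS yS \<theta> *v gT xT yT \<theta>"

definition Qmat :: "('n::finite \<Rightarrow> real^'d) \<Rightarrow> ('n \<Rightarrow> real) \<Rightarrow> ('m::finite \<Rightarrow> real^'d) \<Rightarrow> ('m \<Rightarrow> real) \<Rightarrow> real^'d \<Rightarrow> real^'n^'n" where
  "Qmat xS yS xT yT \<theta> = GS xS yS \<theta> ** HT xT yT \<theta> ** transpose (GS xS yS \<theta>)"

definition fobj :: "real \<Rightarrow> ('n::finite \<Rightarrow> real^'d) \<Rightarrow> ('n \<Rightarrow> real) \<Rightarrow> ('m::finite \<Rightarrow> real^'d) \<Rightarrow> ('m \<Rightarrow> real) \<Rightarrow> real^'n \<Rightarrow> real^'d \<Rightarrow> real" where
  "fobj \<eta> xS yS xT yT w \<theta> =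
     - (pvec xS yS xT yT \<theta> \<bullet> w) + (\<eta> / 2) * (w \<bullet> (Qmat xS yS xT yT \<theta> *v w))"

definition avec :: "real \<Rightarrow> ('n::finite \<Rightarrow> real^'d) \<Rightarrow> ('n \<Rightarrow> real) \<Rightarrow> ('m::finite \<Rightarrow> real^'d) \<Rightarrow> ('m \<Rightarrow> real) \<Rightarrow> real^'n \<Rightarrow> real^'d \<Rightarrow> real^'d" where
  "avec \<eta> xS yS xT yT w \<theta> =
     - (Hw xS yS w \<theta> *v gT xT yT \<theta>) - (HT xT yT \<theta> *v gw xS yS w \<theta>)
     + \<eta> *\<^sub>R ((Hw xS yS w \<theta> ** HT xT yT \<theta>) *v gw xS yS w \<theta>)"

definition Bmat :: "real \<Rightarrow> ('n::finite \<Rightarrow> real^'d) \<Rightarrow> ('n \<Rightarrow> real) \<Rightarrow> ('m::finite \<Rightarrow> real^'d) \<Rightarrow> ('m \<Rightarrow> real) \<Rightarrow> real^'n \<Rightarrow> real^'d \<Rightarrow> real^'d^'d" where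
  "Bmat \<eta> xS yS xT yT w \<theta> =
     - (HT xT yT \<theta> ** Hw xS yS w \<theta>)
     + (\<eta> / 2) *\<^sub>R (Hw xS yS w \<theta> ** HT xT yT \<theta> ** Hw xS yS w \<theta>)"

end

theory Submission imports Defs begin

text \<open>Both losses are quadratic in \<open>\<theta>\<close>, so their gradients are affine,
  \<open>g(\<theta> + \<delta>) = g(\<theta>) + H \<delta>\<close>, with constant symmetric Hessians \<open>H\<close>.
  Since \<open>w\<^sup>T G\<^sub>S(\<theta>) = g\<^sub>w(\<theta>)\<^sup>T\<close>, the objective only depends on the gradients:
  \<open>f(w; \<theta>) = - g\<^sub>T \<bullet> g\<^sub>w + \<eta>/2 g\<^sub>w \<bullet> H\<^sub>T g\<^sub>w\<close>. Substituting the affine gradients and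
  expanding, with the symmetry of the Hessians used to collect all linear terms as
  inner products with \<open>\<delta>\<close>, gives the exact second-order expansion.\<close>

lemma grad_eqI:
  assumes "(f has_derivative (\<lambda>h. g \<bullet> h)) (at \<theta>)"
  shows "grad f \<theta> = g"
  using frechet_derivative_at[OF assms, symmetric] by (simp add: grad_def vec_eq_iff inner_axis)

lemma hess_mult:
  assumes "(grad f has_derivative L) (at \<theta>)"
  shows "hess f \<theta> *v h = L h"
  using frechet_derivative_at[OF assms, symmetric] has_derivative_linear[OF assms]
  by (simp add: hess_def)

lemma grad_square_affine:
  "grad (\<lambda>t. (a \<bullet> t - b)\<^sup>2) \<theta> = (2 * (a \<bullet> \<theta> - b)) *\<^sub>R (a :: real^'d)"
  by (rule grad_eqI) (auto intro!: derivative_eq_intros)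

lemma grad_wloss:
  "grad (wloss x y w) \<theta> = (\<Sum>i\<in>UNIV. (2 * w $ i * (x i \<bullet> \<theta> - y i)) *\<^sub>R x i)"
  unfolding wloss_def
  by (rule grad_eqI) (auto intro!: derivative_eq_intros sum.cong simp: inner_sum_left)

lemma hess_wloss_mult:
  "hess (wloss x y w) \<theta> *v h = (\<Sum>i\<in>UNIV. (2 * w $ i * (x i \<bullet> h)) *\<^sub>R x i)"
  by (rule hess_mult)
    (auto simp: grad_wloss[abs_def] algebra_simps intro!: derivative_eq_intros sum.cong)

lemma hess_wloss_independent: "hess (wloss x y w) \<theta> = hess (wloss x y w) \<theta>'"
  by (simp add: matrix_eq hess_wloss_mult)

lemma hess_wloss_self_adjoint:
  "(hess (wloss x y w) \<theta> *v u) \<bullet> v = u \<bullet> (hess (wloss x y w) \<theta> *v v)"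
  by (simp add: hess_wloss_mult inner_sum_left inner_sum_right inner_commute mult_ac)

lemma grad_wloss_add:
  "grad (wloss x y w) (\<theta> + \<delta>) = grad (wloss x y w) \<theta> + hess (wloss x y w) \<theta> *v \<delta>"
  by (simp add: grad_wloss hess_wloss_mult inner_add_right algebra_simps sum.distrib[symmetric])

lemma vector_matrix_mult_GS: "w v* GS xS yS \<theta> = gw xS yS w \<theta>"
  by (simp add: GS_def gw_def grad_square_affine grad_wloss vec_eq_iff vector_matrix_mult_def
      sum_component algebra_simps)

lemma fobj_eq_gradients:
  "fobj \<eta> xS yS xT yT w \<theta> =
     - (gT xT yT \<theta> \<bullet> gw xS yS w \<theta>) + (\<eta> / 2) * (gw xS yS w \<theta> \<bullet> (HT xT yT \<theta> *v gw xS yS w \<theta>))"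
proof -
  have "pvec xS yS xT yT \<theta> \<bullet> w = gT xT yT \<theta> \<bullet> gw xS yS w \<theta>"
    unfolding pvec_def by (metis vector_matrix_mult_GS dot_lmul_matrix inner_commute)
  moreover have "w \<bullet> (Qmat xS yS xT yT \<theta> *v w) = gw xS yS w \<theta> \<bullet> (HT xT yT \<theta> *v gw xS yS w \<theta>)"
    unfolding Qmat_def
    by (metis vector_matrix_mult_GS dot_lmul_matrix matrix_vector_mul_assoc transpose_matrix_vector)
  ultimately show ?thesis
    by (simp add: fobj_def)
qed

lemma self_adjoint_quadratic_expansion:
  fixes M N :: "real^'d^'d"
  assumes M: "\<And>u v. (M *v u) \<bullet> v = u \<bullet> (M *v v)"
    and N: "\<And>u v. (N *v u) \<bullet> v = u \<bullet> (N *v v)"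
  shows "- ((G + M *v d) \<bullet> (g + N *v d)) + (\<eta> / 2) * ((g + N *v d) \<bullet> (M *v (g + N *v d))) =
           - (G \<bullet> g) + (\<eta> / 2) * (g \<bullet> (M *v g))
           + (- (N *v G) - M *v g + \<eta> *\<^sub>R (N *v (M *v g))) \<bullet> d
           + d \<bullet> (- (M *v (N *v d)) + (\<eta> / 2) *\<^sub>R (N *v (M *v (N *v d))))"
proof -
  have "G \<bullet> (N *v d) = (N *v G) \<bullet> d" "(M *v d) \<bullet> g = (M *v g) \<bullet> d"
    "(M *v d) \<bullet> (N *v d) = d \<bullet> (M *v (N *v d))"
    "g \<bullet> (M *v (N *v d)) = (N *v (M *v g)) \<bullet> d" "(N *v d) \<bullet> (M *v g) = (N *v (M *v g)) \<bullet> d"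
    "(N *v d) \<bullet> (M *v (N *v d)) = d \<bullet> (N *v (M *v (N *v d)))"
    by (metis M N inner_commute)+
  then show ?thesis
    by (simp add: inner_add_left inner_add_right inner_diff_left inner_diff_right
        matrix_vector_right_distrib algebra_simps)
qed

theorem lemma1:
  fixes \<eta> :: real
    and xS :: "'n::finite \<Rightarrow> real^'d" and yS :: "'n \<Rightarrow> real"
    and xT :: "'m::finite \<Rightarrow> real^'d" and yT :: "'m \<Rightarrow> real"
    and w :: "real^'n" and \<theta> \<delta> :: "real^'d"
  shows "fobj \<eta> xS yS xT yT w (\<theta> + \<delta>) =
           fobj \<eta> xS yS xT yT w \<theta> + avec \<eta> xS yS xT yT w \<theta> \<bullet> \<delta>
           + \<delta> \<bullet> (Bmat \<eta> xS yS xT yT w \<theta> *v \<delta>)"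
proof -
  let ?g = "gw xS yS w \<theta>" and ?G = "gT xT yT \<theta>" and ?M = "HT xT yT \<theta>" and ?N = "Hw xS yS w \<theta>"
  have "gw xS yS w (\<theta> + \<delta>) = ?g + ?N *v \<delta>" "gT xT yT (\<theta> + \<delta>) = ?G + ?M *v \<delta>"
    "HT xT yT (\<theta> + \<delta>) = ?M"
    by (simp_all add: gw_def Hw_def gT_def HT_def grad_wloss_add
        hess_wloss_independent[of _ _ _ "\<theta> + \<delta>" \<theta>])
  then have "fobj \<eta> xS yS xT yT w (\<theta> + \<delta>) =
      - ((?G + ?M *v \<delta>) \<bullet> (?g + ?N *v \<delta>)) + (\<eta> / 2) * ((?g + ?N *v \<delta>) \<bullet> (?M *v (?g + ?N *v \<delta>)))"
    by (simp add: fobj_eq_gradients)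
  also have "\<dots> = - (?G \<bullet> ?g) + (\<eta> / 2) * (?g \<bullet> (?M *v ?g))
      + (- (?N *v ?G) - ?M *v ?g + \<eta> *\<^sub>R (?N *v (?M *v ?g))) \<bullet> \<delta>
      + \<delta> \<bullet> (- (?M *v (?N *v \<delta>)) + (\<eta> / 2) *\<^sub>R (?N *v (?M *v (?N *v \<delta>))))"
    by (rule self_adjoint_quadratic_expansion) (simp_all add: HT_def Hw_def hess_wloss_self_adjoint)
  also have "\<dots> = fobj \<eta> xS yS xT yT w \<theta> + avec \<eta> xS yS xT yT w \<theta> \<bullet> \<delta>
      + \<delta> \<bullet> (Bmat \<eta> xS yS xT yT w \<theta> *v \<delta>)"
    by (simp add: fobj_eq_gradients avec_def Bmat_def matrix_vector_mult_add_rdistrib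
        matrix_vector_mult_diff_rdistrib scaleR_matrix_vector_assoc
        matrix_vector_mul_assoc matrix_mul_assoc)
  finally show ?thesis .
qed

end
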